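(* Fix $a\in[0,\infty)$. For a function $O:[0,1]^2\to[0,1]$ the following are equivalent: (1) There exist a continuous and strictly decreasing function $\theta:[0,1]\to[0,\infty]$ and a continuous and decreasing function $\vartheta:[0,\infty]\to[0,1]$ such that $O(x,y)=\vartheta(\theta(x)+\theta(y))$ for all $x,y$, $O$ is an overlap function, and at least one of the following holds: (a) $\theta(x)=\frac{a}{2}$ if and only if $x=1$; (b) $\vartheta(x)=1$ if and only if $x\in[0,a]$. (2) $O$ is an overlap function and there exist a pseudo automorphism $\mathcal{F}$ and a strict t-norm $T$ with $O(x,y)=\mathcal{F}(T(x,y))$ for all $(x,y)\in[0,1]^2$. (3) There exist a strictly increasing bijection $\varphi:[0,1]\to[0,1]$ and a pseudo automorphism $\mathcal{H}$ such that $O(x,y)=\mathcal{H}(\varphi(x)\varphi(y))$ for all $(x,y)\in[0,1]^2$.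
   Context: "Decreasing" means non-increasing and "increasing" means non-decreasing. Arithmetic in $[0,\infty]$ uses $c+\infty=\infty$; continuity on $[0,\infty]$ refers to the usual topology of the extended half-line. An overlap function is a map $O:[0,1]^2\to[0,1]$ that is (O1) commutative, (O2) $O(x,y)=0$ iff $xy=0$, (O3) $O(x,y)=1$ iff $xy=1$, (O4) increasing in each variable, (O5) continuous. A pseudo automorphism is a continuous increasing map $\mathcal{F}:[0,1]\to[0,1]$ with $\mathcal{F}(x)=1$ iff $x=1$ and $\mathcal{F}(x)=0$ iff $x=0$. A t-norm is a commutative, associative map $T:[0,1]^2\to[0,1]$, increasing in each variable, with $T(x,1)=x$; it is strict if it is continuous and strictly increasing on $(0,1]^2$ (i.e. $T(x,y)<T(x',y)$ whenever $y>0$ and $x<x'$). *)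

theory Defs
  imports "HOL-Analysis.Analysis" "HOL-Library.Extended_Nonnegative_Real"
begin

text \<open>Functions on the unit interval/square are total HOL functions whose
 behaviour is only constrained on [0,1] resp. [0,1]^2. The extended half-line
 [0,\<infinity>] is the type ennreal.\<close>

definition overlap :: "(real \<Rightarrow> real \<Rightarrow> real) \<Rightarrow> bool" where
  "overlap Ov \<longleftrightarrow>
     (\<forall>x\<in>{0..1}. \<forall>y\<in>{0..1}. Ov x y \<in> {0..1}) \<and>
     (\<forall>x\<in>{0..1}. \<forall>y\<in>{0..1}. Ov x y = Ov y x) \<and>
     (\<forall>x\<in>{0..1}. \<forall>y\<in>{0..1}. Ov x y = 0 \<longleftrightarrow> x * y = 0) \<and>
     (\<forall>x\<in>{0..1}. \<forall>y\<in>{0..1}. Ov x y = 1 \<longleftrightarrow> x * y = 1) \<and>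
     (\<forall>x\<in>{0..1}. \<forall>x'\<in>{0..1}. \<forall>y\<in>{0..1}. x \<le> x' \<longrightarrow> Ov x y \<le> Ov x' y \<and> Ov y x \<le> Ov y x') \<and>
     continuous_on ({0..1} \<times> {0..1}) (\<lambda>(x, y). Ov x y)"

definition pseudo_automorphism :: "(real \<Rightarrow> real) \<Rightarrow> bool" where
  "pseudo_automorphism F \<longleftrightarrow>
     (\<forall>x\<in>{0..1}. F x \<in> {0..1}) \<and>
     continuous_on {0..1} F \<and> mono_on {0..1} F \<and>
     (\<forall>x\<in>{0..1}. F x = 1 \<longleftrightarrow> x = 1) \<and>
     (\<forall>x\<in>{0..1}. F x = 0 \<longleftrightarrow> x = 0)"

definition tnorm :: "(real \<Rightarrow> real \<Rightarrow> real) \<Rightarrow> bool" where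
  "tnorm T \<longleftrightarrow>
     (\<forall>x\<in>{0..1}. \<forall>y\<in>{0..1}. T x y \<in> {0..1}) \<and>
     (\<forall>x\<in>{0..1}. \<forall>y\<in>{0..1}. T x y = T y x) \<and>
     (\<forall>x\<in>{0..1}. \<forall>y\<in>{0..1}. \<forall>z\<in>{0..1}. T x (T y z) = T (T x y) z) \<and>
     (\<forall>x\<in>{0..1}. \<forall>x'\<in>{0..1}. \<forall>y\<in>{0..1}. x \<le> x' \<longrightarrow> T x y \<le> T x' y \<and> T y x \<le> T y x') \<and>
     (\<forall>x\<in>{0..1}. T x 1 = x)"

definition strict_tnorm :: "(real \<Rightarrow> real \<Rightarrow> real) \<Rightarrow> bool" where
  "strict_tnorm T \<longleftrightarrow> tnorm T \<and>
     continuous_on ({0..1} \<times> {0..1}) (\<lambda>(x, y). T x y) \<and>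
     (\<forall>x\<in>{0..1}. \<forall>x'\<in>{0..1}. \<forall>y\<in>{0..1}. 0 < y \<longrightarrow> x < x' \<longrightarrow> T x y < T x' y)"

end

theory Submission
  imports Defs
begin

text \<open>
  (2) \<open>\<Longleftrightarrow>\<close> (3) rests on the representation theorem for strict t-norms: every strict t-norm \<open>T\<close> is
  isomorphic to the product, \<open>\<phi> (T x y) = \<phi> x * \<phi> y\<close> for an order automorphism \<open>\<phi>\<close> of \<open>[0,1]\<close>.
  To find \<open>\<phi>\<close> one builds a continuous, strictly decreasing \<open>gen : [0,\<infinity>) \<rightarrow> (0,1]\<close> with
  \<open>gen (s + t) = T (gen s) (gen t)\<close>: on dyadic rationals from iterated \<open>T\<close>-square roots of \<open>1/2\<close>,
  elsewhere by monotone limits; then \<open>\<phi>\<close> is the inverse of \<open>gen \<circ> (- ln)\<close>.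

  (1) \<open>\<Longleftrightarrow>\<close> (3) is the change of variables \<open>\<theta> = \<theta> 1 - ln \<circ> \<phi>\<close>, which turns \<open>\<phi> x * \<phi> y\<close> into
  \<open>\<theta> x + \<theta> y\<close>. Going from (1) to (3) needs \<open>\<theta> 0 = \<infinity>\<close>; otherwise continuity of \<open>\<theta>\<close> yields
  \<open>x \<noteq> 0\<close> with \<open>2 \<theta> x = \<theta> 0 + \<theta> 1\<close>, so that \<open>O x x = O 0 1 = 0\<close>, contradicting (O2).
  The outer function of (3) is then the diagonal \<open>t \<mapsto> O w w\<close> with \<open>\<phi> w = sqrt t\<close>.
\<close>

section \<open>Continuity of monotone functions with order-connected image\<close>

lemma eventually_monotone_same_side:
  fixes f :: "'a::linorder_topology \<Rightarrow> 'b::linorder"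
  assumes monotone: "mono_on S f \<or> antimono_on S f" and "x \<in> S" "x' \<in> S"
  shows "\<forall>\<^sub>F y in at x within S. (f x' < f x \<longrightarrow> f x' \<le> f y) \<and> (f x < f x' \<longrightarrow> f y \<le> f x')"
proof -
  have "\<forall>\<^sub>F y in at x within S. y \<in> S \<and> (x' < x \<longrightarrow> x' < y) \<and> (x < x' \<longrightarrow> y < x')"
  proof -
    have "\<forall>\<^sub>F y in at x within S. x' < y" if "x' < x"
      using order_tendstoD(1)[OF tendsto_ident_at that] .
    moreover have "\<forall>\<^sub>F y in at x within S. y < x'" if "x < x'"
      using order_tendstoD(2)[OF tendsto_ident_at that] .
    ultimately show ?thesis
      by (intro eventually_conj) (auto simp: eventually_at_filter)
  qed
  then show ?thesis
  proof (rule eventually_mono)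
    fix y assume y: "y \<in> S \<and> (x' < x \<longrightarrow> x' < y) \<and> (x < x' \<longrightarrow> y < x')"
    have "x' < x \<Longrightarrow> f x' \<le> f y \<and> f x' \<le> f x \<or> f y \<le> f x' \<and> f x \<le> f x'"
      and "x < x' \<Longrightarrow> f y \<le> f x' \<and> f x \<le> f x' \<or> f x' \<le> f y \<and> f x' \<le> f x"
      using monotone y assms(2,3) unfolding monotone_on_def by (meson less_imp_le)+
    then show "(f x' < f x \<longrightarrow> f x' \<le> f y) \<and> (f x < f x' \<longrightarrow> f y \<le> f x')"
      by (cases x x' rule: linorder_cases) (auto simp: not_le[symmetric])
  qed
qed

lemma continuous_on_monotone_order_connected_image:
  fixes f :: "'a::linorder_topology \<Rightarrow> 'b::{linorder_topology, dense_linorder}"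
  assumes monotone: "mono_on S f \<or> antimono_on S f"
    and order_connected: "\<And>u v w. u \<in> f ` S \<Longrightarrow> v \<in> f ` S \<Longrightarrow> u \<le> w \<Longrightarrow> w \<le> v \<Longrightarrow> w \<in> f ` S"
  shows "continuous_on S f"
proof -
  have "(f \<longlongrightarrow> f x) (at x within S)" if "x \<in> S" for x
  proof (rule order_tendstoI)
    fix c assume "c < f x"
    show "\<forall>\<^sub>F y in at x within S. c < f y"
    proof (cases "\<exists>v\<in>f ` S. v \<le> c")
      case True
      then obtain v where "v \<in> f ` S" "v \<le> c" by blast
      obtain w where "c < w" "w < f x" using dense[OF \<open>c < f x\<close>] by blast
      then have "w \<in> f ` S"
        using order_connected[OF \<open>v \<in> f ` S\<close> imageI[OF \<open>x \<in> S\<close>]] \<open>v \<le> c\<close> by simp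
      then obtain x' where "x' \<in> S" "f x' = w" by blast
      from eventually_monotone_same_side[OF monotone \<open>x \<in> S\<close> \<open>x' \<in> S\<close>] show ?thesis
        by (rule eventually_mono) (use \<open>c < w\<close> \<open>w < f x\<close> \<open>f x' = w\<close> in auto)
    next
      case False
      then show ?thesis by (auto simp: eventually_at_filter not_le)
    qed
  next
    fix c assume "f x < c"
    show "\<forall>\<^sub>F y in at x within S. f y < c"
    proof (cases "\<exists>v\<in>f ` S. c \<le> v")
      case True
      then obtain v where "v \<in> f ` S" "c \<le> v" by blast
      obtain w where "f x < w" "w < c" using dense[OF \<open>f x < c\<close>] by blast
      then have "w \<in> f ` S"
        using order_connected[OF imageI[OF \<open>x \<in> S\<close>] \<open>v \<in> f ` S\<close>] \<open>c \<le> v\<close> by simp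
      then obtain x' where "x' \<in> S" "f x' = w" by blast
      from eventually_monotone_same_side[OF monotone \<open>x \<in> S\<close> \<open>x' \<in> S\<close>] show ?thesis
        by (rule eventually_mono) (use \<open>w < c\<close> \<open>f x < w\<close> \<open>f x' = w\<close> in auto)
    next
      case False
      then show ?thesis by (auto simp: eventually_at_filter not_le)
    qed
  qed
  then show ?thesis by (simp add: continuous_on_def)
qed

section \<open>Order automorphisms of the unit interval\<close>

definition order_automorphism :: "(real \<Rightarrow> real) \<Rightarrow> bool" where
  "order_automorphism \<phi> \<longleftrightarrow> bij_betw \<phi> {0..1} {0..1} \<and> strict_mono_on {0..1} \<phi>"

lemma order_automorphismI:
  "strict_mono_on {0..1} \<phi> \<Longrightarrow> \<phi> ` {0..1} = {0..1} \<Longrightarrow> order_automorphism \<phi>"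
  unfolding order_automorphism_def bij_betw_def using strict_mono_on_imp_inj_on by blast

lemma order_automorphism_image: "order_automorphism \<phi> \<Longrightarrow> \<phi> ` {0..1} = {0..1}"
  unfolding order_automorphism_def bij_betw_def by blast

lemma order_automorphism_in:
  assumes "order_automorphism \<phi>" "x \<in> {0..1}"
  shows "\<phi> x \<in> {0..1}"
  using imageI[OF assms(2), of \<phi>] unfolding order_automorphism_image[OF assms(1)] .

lemma order_automorphism_surj:
  assumes "order_automorphism \<phi>" "y \<in> {0..1}"
  obtains x where "x \<in> {0..1}" "\<phi> x = y"
proof -
  have "y \<in> \<phi> ` {0..1}"
    using assms by (simp add: order_automorphism_image)
  then show ?thesis
    using that by blast
qed

lemma order_automorphism_less_iff:
  "order_automorphism \<phi> \<Longrightarrow> x \<in> {0..1} \<Longrightarrow> y \<in> {0..1} \<Longrightarrow> \<phi> x < \<phi> y \<longleftrightarrow> x < y"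
  unfolding order_automorphism_def by (metis linorder_neqE_linordered_idom order_less_asym strict_mono_onD)

lemma order_automorphism_le_iff:
  "order_automorphism \<phi> \<Longrightarrow> x \<in> {0..1} \<Longrightarrow> y \<in> {0..1} \<Longrightarrow> \<phi> x \<le> \<phi> y \<longleftrightarrow> x \<le> y"
  by (meson not_le order_automorphism_less_iff)

lemma order_automorphism_eq_iff:
  "order_automorphism \<phi> \<Longrightarrow> x \<in> {0..1} \<Longrightarrow> y \<in> {0..1} \<Longrightarrow> \<phi> x = \<phi> y \<longleftrightarrow> x = y"
  by (metis order.antisym order.refl order_automorphism_le_iff)

lemma order_automorphism_0:
  assumes "order_automorphism \<phi>"
  shows "\<phi> 0 = 0"
proof -
  obtain x where x: "x \<in> {0..1}" "\<phi> x = 0"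
    by (rule order_automorphism_surj[OF assms, of 0]) auto
  then have "\<phi> 0 \<le> 0"
    using order_automorphism_le_iff[OF assms, of 0 x] by simp
  with order_automorphism_in[OF assms, of 0] show ?thesis
    by simp
qed

lemma order_automorphism_1:
  assumes "order_automorphism \<phi>"
  shows "\<phi> 1 = 1"
proof -
  obtain x where x: "x \<in> {0..1}" "\<phi> x = 1"
    by (rule order_automorphism_surj[OF assms, of 1]) auto
  then have "1 \<le> \<phi> 1"
    using order_automorphism_le_iff[OF assms, of x 1] by simp
  with order_automorphism_in[OF assms, of 1] show ?thesis
    by simp
qed

lemma order_automorphism_continuous:
  assumes "order_automorphism \<phi>"
  shows "continuous_on {0..1} \<phi>"
proof (rule continuous_on_monotone_order_connected_image)
  show "mono_on {0..1} \<phi> \<or> antimono_on {0..1} \<phi>"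
    using order_automorphism_le_iff[OF assms] by (auto intro: mono_onI)
qed (auto simp: order_automorphism_image[OF assms])

lemma order_automorphism_inv_f:
  "order_automorphism \<phi> \<Longrightarrow> x \<in> {0..1} \<Longrightarrow> inv_into {0..1} \<phi> (\<phi> x) = x"
  unfolding order_automorphism_def bij_betw_def by auto

lemma order_automorphism_f_inv:
  "order_automorphism \<phi> \<Longrightarrow> x \<in> {0..1} \<Longrightarrow> \<phi> (inv_into {0..1} \<phi> x) = x"
  unfolding order_automorphism_def bij_betw_def by (simp add: f_inv_into_f)

lemma order_automorphism_inv:
  assumes "order_automorphism \<phi>"
  shows "order_automorphism (inv_into {0..1} \<phi>)"
proof (rule order_automorphismI)
  have bij: "bij_betw (inv_into {0..1} \<phi>) {0..1} {0..1}"
    using assms bij_betw_inv_into unfolding order_automorphism_def by blast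
  then show "inv_into {0..1} \<phi> ` {0..1} = {0..1}"
    by (simp add: bij_betw_def)
  show "strict_mono_on {0..1} (inv_into {0..1} \<phi>)"
  proof (rule strict_mono_onI)
    fix r s :: real assume "r \<in> {0..1}" "s \<in> {0..1}" "r < s"
    then have "\<phi> (inv_into {0..1} \<phi> r) < \<phi> (inv_into {0..1} \<phi> s)"
      using order_automorphism_f_inv[OF assms] by simp
    moreover have "inv_into {0..1} \<phi> r \<in> {0..1}" "inv_into {0..1} \<phi> s \<in> {0..1}"
      using bij \<open>r \<in> {0..1}\<close> \<open>s \<in> {0..1}\<close> bij_betwE by blast+
    ultimately show "inv_into {0..1} \<phi> r < inv_into {0..1} \<phi> s"
      using order_automorphism_less_iff[OF assms] by simp
  qed
qed

lemma order_automorphism_comp: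
  assumes "order_automorphism \<phi>" "order_automorphism \<psi>"
  shows "order_automorphism (\<phi> \<circ> \<psi>)"
proof (rule order_automorphismI)
  show "strict_mono_on {0..1} (\<phi> \<circ> \<psi>)"
  proof (rule strict_mono_onI)
    fix r s :: real assume "r \<in> {0..1}" "s \<in> {0..1}" "r < s"
    then have "\<psi> r < \<psi> s" "\<psi> r \<in> {0..1}" "\<psi> s \<in> {0..1}"
      using assms(2) order_automorphism_in order_automorphism_less_iff by blast+
    then show "(\<phi> \<circ> \<psi>) r < (\<phi> \<circ> \<psi>) s"
      using order_automorphism_less_iff[OF assms(1)] by simp
  qed
  show "(\<phi> \<circ> \<psi>) ` {0..1} = {0..1}"
    using assms unfolding order_automorphism_def bij_betw_def image_comp[symmetric] by simp
qed

lemma order_automorphism_sqrt: "order_automorphism sqrt"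
proof (rule order_automorphismI)
  show "strict_mono_on {0..1} sqrt"
    by (rule strict_mono_onI) simp
  show "sqrt ` {0..1} = {0..1}"
  proof
    show "{0..1} \<subseteq> sqrt ` {0..1}"
    proof
      fix x :: real assume "x \<in> {0..1}"
      then have "x = sqrt (x\<^sup>2)" "x\<^sup>2 \<in> {0..1}"
        by (auto simp: power_le_one)
      then show "x \<in> sqrt ` {0..1}" by (rule image_eqI)
    qed
  qed auto
qed

lemma unit_mult_eq_1_iff:
  fixes x y :: real
  assumes "x \<in> {0..1}" "y \<in> {0..1}"
  shows "x * y = 1 \<longleftrightarrow> x = 1 \<and> y = 1"
proof
  assume xy: "x * y = 1"
  have "x * y \<le> x" "x * y \<le> y"
    using assms by (simp_all add: mult_left_le mult_left_le_one_le)
  then have "1 \<le> x" "1 \<le> y"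
    unfolding xy .
  with assms show "x = 1 \<and> y = 1"
    by auto
qed simp

lemma order_automorphism_mult_in:
  "order_automorphism \<phi> \<Longrightarrow> x \<in> {0..1} \<Longrightarrow> y \<in> {0..1} \<Longrightarrow> \<phi> x * \<phi> y \<in> {0..1}"
  using order_automorphism_in[of \<phi> x] order_automorphism_in[of \<phi> y] by (auto intro: mult_le_one)

definition neg_ln :: "real \<Rightarrow> ennreal" where
  "neg_ln t = (if t = 0 then \<infinity> else ennreal (- ln t))"

definition exp_neg :: "ennreal \<Rightarrow> real" where
  "exp_neg z = (if z = \<infinity> then 0 else exp (- enn2real z))"

lemma exp_neg_in: "exp_neg z \<in> {0..1}"
  by (simp add: exp_neg_def)

lemma exp_neg_0 [simp]: "exp_neg 0 = 1"
  by (simp add: exp_neg_def)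

lemma neg_ln_exp_neg [simp]: "neg_ln (exp_neg z) = z"
  by (cases z) (simp_all add: exp_neg_def neg_ln_def)

lemma exp_neg_neg_ln [simp]: "t \<in> {0..1} \<Longrightarrow> exp_neg (neg_ln t) = t"
  by (auto simp: exp_neg_def neg_ln_def)

lemma exp_neg_strict_antimono: "z < z' \<Longrightarrow> exp_neg z' < exp_neg z"
  by (cases z; cases z') (auto simp: exp_neg_def ennreal_less_iff)

lemma exp_neg_antimono: "antimono exp_neg"
  by (rule antimonoI) (metis exp_neg_strict_antimono order_le_less order_refl)

lemma neg_ln_less_iff:
  assumes "s \<in> {0..1}" "t \<in> {0..1}"
  shows "neg_ln s < neg_ln t \<longleftrightarrow> t < s"
  by (metis assms exp_neg_neg_ln exp_neg_strict_antimono not_less_iff_gr_or_eq)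

lemma neg_ln_eq_0_iff: "t \<in> {0..1} \<Longrightarrow> neg_ln t = 0 \<longleftrightarrow> t = 1"
  by (metis exp_neg_0 exp_neg_neg_ln neg_ln_exp_neg)

lemma neg_ln_mult:
  assumes "s \<in> {0..1}" "t \<in> {0..1}"
  shows "neg_ln (s * t) = neg_ln s + neg_ln t"
proof (cases "s = 0 \<or> t = 0")
  case False
  with assms have "0 \<le> - ln s" "0 \<le> - ln t" "0 < s" "0 < t"
    by auto
  then show ?thesis
    by (simp add: neg_ln_def ln_mult ennreal_plus[symmetric])
qed (auto simp: neg_ln_def)

lemma continuous_on_neg_ln: "continuous_on {0..1} neg_ln"
proof (rule continuous_on_monotone_order_connected_image)
  show "mono_on {0..1} neg_ln \<or> antimono_on {0..1} neg_ln"
    by (auto intro!: monotone_onI simp: not_less[symmetric] neg_ln_less_iff)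
  have "z \<in> neg_ln ` {0..1}" for z
    using imageI[OF exp_neg_in, of neg_ln z] by simp
  then show "w \<in> neg_ln ` {0..1}" for w
    by blast
qed

lemma exp_neg_minus_antimono: "antimono (\<lambda>z. exp_neg (z - c))"
  by (intro antimonoI exp_neg_antimono[THEN antimonoD] ennreal_minus_mono) simp_all

lemma continuous_on_exp_neg_minus:
  assumes "c \<noteq> \<infinity>"
  shows "continuous_on UNIV (\<lambda>z. exp_neg (z - c))"
proof (rule continuous_on_monotone_order_connected_image)
  show "mono_on UNIV (\<lambda>z. exp_neg (z - c)) \<or> antimono_on UNIV (\<lambda>z. exp_neg (z - c))"
    using exp_neg_minus_antimono by (simp add: antimono_def monotone_on_def)
  have "range (\<lambda>z. exp_neg (z - c)) = {0..1}"
  proof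
    show "range (\<lambda>z. exp_neg (z - c)) \<subseteq> {0..1}"
      using exp_neg_in by blast
    show "{0..1} \<subseteq> range (\<lambda>z. exp_neg (z - c))"
    proof
      fix t :: real assume "t \<in> {0..1}"
      moreover have "neg_ln t + c - c = neg_ln t"
        using assms by (simp add: infinity_ennreal_def)
      ultimately show "t \<in> range (\<lambda>z. exp_neg (z - c))"
        by (intro range_eqI[where x = "neg_ln t + c"]) simp
    qed
  qed
  then show "w \<in> range (\<lambda>z. exp_neg (z - c))" if "u \<in> range (\<lambda>z. exp_neg (z - c))"
    "v \<in> range (\<lambda>z. exp_neg (z - c))" "u \<le> w" "w \<le> v" for u v w
    using that by auto
qed

lemma pseudo_automorphism_in: "pseudo_automorphism H \<Longrightarrow> x \<in> {0..1} \<Longrightarrow> H x \<in> {0..1}"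
  and pseudo_automorphism_continuous: "pseudo_automorphism H \<Longrightarrow> continuous_on {0..1} H"
  and pseudo_automorphism_mono:
    "pseudo_automorphism H \<Longrightarrow> x \<in> {0..1} \<Longrightarrow> y \<in> {0..1} \<Longrightarrow> x \<le> y \<Longrightarrow> H x \<le> H y"
  and pseudo_automorphism_eq_0_iff: "pseudo_automorphism H \<Longrightarrow> x \<in> {0..1} \<Longrightarrow> H x = 0 \<longleftrightarrow> x = 0"
  and pseudo_automorphism_eq_1_iff: "pseudo_automorphism H \<Longrightarrow> x \<in> {0..1} \<Longrightarrow> H x = 1 \<longleftrightarrow> x = 1"
  unfolding pseudo_automorphism_def mono_on_def by blast+

lemma overlap_in: "overlap B \<Longrightarrow> x \<in> {0..1} \<Longrightarrow> y \<in> {0..1} \<Longrightarrow> B x y \<in> {0..1}"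
  and overlap_commute: "overlap B \<Longrightarrow> x \<in> {0..1} \<Longrightarrow> y \<in> {0..1} \<Longrightarrow> B x y = B y x"
  and overlap_eq_0_iff: "overlap B \<Longrightarrow> x \<in> {0..1} \<Longrightarrow> y \<in> {0..1} \<Longrightarrow> B x y = 0 \<longleftrightarrow> x * y = 0"
  and overlap_eq_1_iff: "overlap B \<Longrightarrow> x \<in> {0..1} \<Longrightarrow> y \<in> {0..1} \<Longrightarrow> B x y = 1 \<longleftrightarrow> x * y = 1"
  and overlap_continuous: "overlap B \<Longrightarrow> continuous_on ({0..1} \<times> {0..1}) (\<lambda>(x, y). B x y)"
  unfolding overlap_def by blast+

lemma overlap_mono:
  assumes "overlap B" "x \<in> {0..1}" "x' \<in> {0..1}" "y \<in> {0..1}" "y' \<in> {0..1}" "x \<le> x'" "y \<le> y'"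
  shows "B x y \<le> B x' y'"
proof -
  have "B x y \<le> B x' y" "B x' y \<le> B x' y'"
    using assms unfolding overlap_def by blast+
  then show ?thesis
    by (rule order_trans)
qed

lemma pseudo_automorphism_comp:
  assumes H: "pseudo_automorphism H" and \<phi>: "order_automorphism \<phi>"
  shows "pseudo_automorphism (H \<circ> \<phi>)"
  unfolding pseudo_automorphism_def
proof (intro conjI ballI)
  fix x :: real assume x: "x \<in> {0..1}"
  note \<phi>x = order_automorphism_in[OF \<phi> x]
  show "(H \<circ> \<phi>) x \<in> {0..1}"
    using pseudo_automorphism_in[OF H \<phi>x] by simp
  show "(H \<circ> \<phi>) x = 1 \<longleftrightarrow> x = 1"
    using pseudo_automorphism_eq_1_iff[OF H \<phi>x] order_automorphism_eq_iff[OF \<phi> x, of 1]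
      order_automorphism_1[OF \<phi>] by simp
  show "(H \<circ> \<phi>) x = 0 \<longleftrightarrow> x = 0"
    using pseudo_automorphism_eq_0_iff[OF H \<phi>x] order_automorphism_eq_iff[OF \<phi> x, of 0]
      order_automorphism_0[OF \<phi>] by simp
next
  show "continuous_on {0..1} (H \<circ> \<phi>)"
    using continuous_on_compose[OF order_automorphism_continuous[OF \<phi>], of H]
      pseudo_automorphism_continuous[OF H] order_automorphism_image[OF \<phi>] by simp
  show "mono_on {0..1} (H \<circ> \<phi>)"
    using pseudo_automorphism_mono[OF H] order_automorphism_in[OF \<phi>] order_automorphism_le_iff[OF \<phi>]
    by (auto intro: mono_onI)
qed

lemma continuous_on_case_prod_mult: "continuous_on S (\<lambda>(x, y). x * y :: real)"
  unfolding case_prod_beta by (intro continuous_intros)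

lemma continuous_on_case_prod_comp:
  assumes B: "continuous_on (A \<times> A) (\<lambda>(x, y). B x y)"
    and \<phi>: "continuous_on S \<phi>" "\<And>x. x \<in> S \<Longrightarrow> \<phi> x \<in> A"
  shows "continuous_on (S \<times> S) (\<lambda>(x, y). B (\<phi> x) (\<phi> y))"
proof -
  have "continuous_on (S \<times> S) (\<lambda>p. (\<phi> (fst p), \<phi> (snd p)))"
    by (intro continuous_on_Pair continuous_on_compose2[OF \<phi>(1)] continuous_intros) auto
  moreover have "(\<lambda>p. (\<phi> (fst p), \<phi> (snd p))) ` (S \<times> S) \<subseteq> A \<times> A"
    using \<phi>(2) by force
  ultimately have "continuous_on (S \<times> S) (\<lambda>p. (\<lambda>(x, y). B x y) (\<phi> (fst p), \<phi> (snd p)))"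
    by (rule continuous_on_compose2[OF B])
  then show ?thesis
    by (simp add: case_prod_beta)
qed

lemma overlap_mult: "overlap (\<lambda>x y. x * y)"
  unfolding overlap_def
  by (auto simp: mult_le_one mult_right_mono mult_left_mono continuous_on_case_prod_mult)

lemma overlap_comp:
  assumes B: "overlap B" and \<phi>: "order_automorphism \<phi>" and H: "pseudo_automorphism H"
    and Ov: "\<forall>x\<in>{0..1}. \<forall>y\<in>{0..1}. Ov x y = H (B (\<phi> x) (\<phi> y))"
  shows "overlap Ov"
  unfolding overlap_def
proof (intro conjI ballI impI)
  fix x y :: real assume x: "x \<in> {0..1}" and y: "y \<in> {0..1}"
  have \<phi>xy: "\<phi> x \<in> {0..1}" "\<phi> y \<in> {0..1}"
    using order_automorphism_in[OF \<phi>] x y by auto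
  note Bxy = overlap_in[OF B \<phi>xy]
  show "Ov x y \<in> {0..1}"
    using pseudo_automorphism_in[OF H Bxy] Ov x y by simp
  show "Ov x y = Ov y x"
    using overlap_commute[OF B \<phi>xy] Ov x y by simp
  have "Ov x y = 0 \<longleftrightarrow> \<phi> x * \<phi> y = 0"
    using pseudo_automorphism_eq_0_iff[OF H Bxy] overlap_eq_0_iff[OF B \<phi>xy] Ov x y by simp
  also have "\<dots> \<longleftrightarrow> x * y = 0"
    using order_automorphism_eq_iff[OF \<phi>, of _ 0] order_automorphism_0[OF \<phi>] x y by auto
  finally show "Ov x y = 0 \<longleftrightarrow> x * y = 0" .
  have "Ov x y = 1 \<longleftrightarrow> \<phi> x * \<phi> y = 1"
    using pseudo_automorphism_eq_1_iff[OF H Bxy] overlap_eq_1_iff[OF B \<phi>xy] Ov x y by simp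
  also have "\<dots> \<longleftrightarrow> x * y = 1"
    using order_automorphism_eq_iff[OF \<phi>, of _ 1] order_automorphism_1[OF \<phi>] x y \<phi>xy
    by (simp add: unit_mult_eq_1_iff)
  finally show "Ov x y = 1 \<longleftrightarrow> x * y = 1" .
next
  fix x x' y :: real assume x: "x \<in> {0..1}" "x' \<in> {0..1}" "x \<le> x'" and y: "y \<in> {0..1}"
  have \<phi>x: "\<phi> x \<in> {0..1}" "\<phi> x' \<in> {0..1}" "\<phi> x \<le> \<phi> x'" and \<phi>y: "\<phi> y \<in> {0..1}"
    using order_automorphism_in[OF \<phi>] order_automorphism_le_iff[OF \<phi>] x y by auto
  have "B (\<phi> x) (\<phi> y) \<le> B (\<phi> x') (\<phi> y)" "B (\<phi> y) (\<phi> x) \<le> B (\<phi> y) (\<phi> x')"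
    using overlap_mono[OF B] \<phi>x \<phi>y by auto
  then show "Ov x y \<le> Ov x' y" "Ov y x \<le> Ov y x'"
    using pseudo_automorphism_mono[OF H] overlap_in[OF B] \<phi>x \<phi>y Ov x y by simp_all
next
  have "continuous_on ({0..1} \<times> {0..1}) (\<lambda>(x, y). B (\<phi> x) (\<phi> y))"
    using overlap_continuous[OF B] order_automorphism_continuous[OF \<phi>] order_automorphism_in[OF \<phi>]
    by (rule continuous_on_case_prod_comp)
  moreover have "(\<lambda>(x, y). B (\<phi> x) (\<phi> y)) ` ({0..1} \<times> {0..1}) \<subseteq> {0..1}"
    using overlap_in[OF B] order_automorphism_in[OF \<phi>] by auto
  ultimately have "continuous_on ({0..1} \<times> {0..1}) (\<lambda>p. H ((\<lambda>(x, y). B (\<phi> x) (\<phi> y)) p))"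
    by (rule continuous_on_compose2[OF pseudo_automorphism_continuous[OF H]])
  then show "continuous_on ({0..1} \<times> {0..1}) (\<lambda>(x, y). Ov x y)"
    by (rule continuous_on_cong[THEN iffD1, rotated 2]) (use Ov in auto)
qed

lemma overlap_diagonal:
  assumes B: "overlap B"
  shows "pseudo_automorphism (\<lambda>t. B t t)"
  unfolding pseudo_automorphism_def
proof (intro conjI ballI)
  fix t :: real assume t: "t \<in> {0..1}"
  show "B t t \<in> {0..1}"
    using overlap_in[OF B t t] .
  show "B t t = 1 \<longleftrightarrow> t = 1"
    using overlap_eq_1_iff[OF B t t] unit_mult_eq_1_iff[OF t t] by simp
  show "B t t = 0 \<longleftrightarrow> t = 0"
    using overlap_eq_0_iff[OF B t t] by simp
next
  have "continuous_on {0..1} (\<lambda>t. (t, t))" "(\<lambda>t. (t, t)) ` {0..1} \<subseteq> {0..1} \<times> {0..1::real}"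
    by (auto intro: continuous_intros)
  then have "continuous_on {0..1} (\<lambda>t. (\<lambda>(x, y). B x y) (t, t))"
    by (rule continuous_on_compose2[OF overlap_continuous[OF B]])
  then show "continuous_on {0..1} (\<lambda>t. B t t)"
    by simp
  show "mono_on {0..1} (\<lambda>t. B t t)"
    using overlap_mono[OF B] by (auto intro: mono_onI)
qed

lemma pseudo_automorphism_exp_neg_minus:
  assumes H: "pseudo_automorphism H" and "c \<noteq> \<infinity>"
  shows "continuous_on UNIV (\<lambda>z. H (exp_neg (z - c)))"
    and "antimono (\<lambda>z. H (exp_neg (z - c)))"
    and "H (exp_neg (z - c)) \<in> {0..1}"
proof -
  show "continuous_on UNIV (\<lambda>z. H (exp_neg (z - c)))"
    using continuous_on_compose2[OF pseudo_automorphism_continuous[OF H] continuous_on_exp_neg_minus[OF assms(2)]]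
      exp_neg_in by blast
  show "antimono (\<lambda>z. H (exp_neg (z - c)))"
  proof (rule antimonoI)
    fix z z' :: ennreal assume "z \<le> z'"
    then have "exp_neg (z' - c) \<le> exp_neg (z - c)"
      by (rule exp_neg_minus_antimono[THEN antimonoD])
    then show "H (exp_neg (z' - c)) \<le> H (exp_neg (z - c))"
      by (rule pseudo_automorphism_mono[OF H exp_neg_in exp_neg_in])
  qed
  show "H (exp_neg (z - c)) \<in> {0..1}"
    using pseudo_automorphism_in[OF H exp_neg_in] .
qed

section \<open>Strict t-norms\<close>

locale t_norm =
  fixes T :: "real \<Rightarrow> real \<Rightarrow> real"
  assumes tnorm: "tnorm T"
begin

lemma T_in: "x \<in> {0..1} \<Longrightarrow> y \<in> {0..1} \<Longrightarrow> T x y \<in> {0..1}"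
  and T_commute: "x \<in> {0..1} \<Longrightarrow> y \<in> {0..1} \<Longrightarrow> T x y = T y x"
  and T_assoc: "x \<in> {0..1} \<Longrightarrow> y \<in> {0..1} \<Longrightarrow> z \<in> {0..1} \<Longrightarrow> T x (T y z) = T (T x y) z"
  and T_mono: "x \<in> {0..1} \<Longrightarrow> x' \<in> {0..1} \<Longrightarrow> y \<in> {0..1} \<Longrightarrow> x \<le> x' \<Longrightarrow> T y x \<le> T y x'"
  and T_right_one: "x \<in> {0..1} \<Longrightarrow> T x 1 = x"
  using tnorm unfolding tnorm_def by blast+

lemma T_left_one: "x \<in> {0..1} \<Longrightarrow> T 1 x = x"
  using T_commute[of 1 x] T_right_one[of x] by simp

lemma T_left_zero: "y \<in> {0..1} \<Longrightarrow> T 0 y = 0"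
  using T_mono[of y 1 0] T_right_one[of 0] T_in[of 0 y] by simp

lemma T_right_zero: "y \<in> {0..1} \<Longrightarrow> T y 0 = 0"
  using T_commute[of y 0] T_left_zero[of y] by simp

lemma T_le: "x \<in> {0..1} \<Longrightarrow> y \<in> {0..1} \<Longrightarrow> T x y \<le> x"
  using T_mono[of y 1 x] T_right_one by simp

primrec tpow :: "real \<Rightarrow> nat \<Rightarrow> real" where
  "tpow x 0 = 1"
| "tpow x (Suc k) = T x (tpow x k)"

lemma tpow_in: "x \<in> {0..1} \<Longrightarrow> tpow x k \<in> {0..1}"
  by (induction k) (simp, simp add: T_in del: atLeastAtMost_iff)

lemma tpow_add: "x \<in> {0..1} \<Longrightarrow> tpow x (m + n) = T (tpow x m) (tpow x n)"
proof (induction m)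
  case 0
  then show ?case using T_left_one tpow_in by simp
next
  case (Suc m)
  then show ?case using T_assoc[of x "tpow x m" "tpow x n"] tpow_in by simp
qed

lemma tpow_T_self: "x \<in> {0..1} \<Longrightarrow> tpow (T x x) k = tpow x (2 * k)"
proof (induction k)
  case (Suc k)
  then show ?case
    using T_assoc[of x x "tpow x (2 * k)"] tpow_in by simp
qed simp

lemma tpow_antimono: "x \<in> {0..1} \<Longrightarrow> m \<le> n \<Longrightarrow> tpow x n \<le> tpow x m"
  using tpow_add[of x m "n - m"] T_le tpow_in by simp

lemma tnorm_conj:
  assumes \<phi>: "order_automorphism \<phi>"
  shows "tnorm (\<lambda>x y. inv_into {0..1} \<phi> (T (\<phi> x) (\<phi> y)))"
proof -
  define \<psi> where "\<psi> = inv_into {0..1} \<phi>"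
  define S where "S x y = \<psi> (T (\<phi> x) (\<phi> y))" for x y
  have \<psi>: "order_automorphism \<psi>"
    unfolding \<psi>_def using order_automorphism_inv[OF \<phi>] .
  have \<phi>_in: "\<phi> x \<in> {0..1}" if "x \<in> {0..1}" for x
    using order_automorphism_in[OF \<phi> that] .
  have T\<phi>_in: "T (\<phi> x) (\<phi> y) \<in> {0..1}" if "x \<in> {0..1}" "y \<in> {0..1}" for x y
    using T_in[OF \<phi>_in \<phi>_in] that .
  have S_in: "S x y \<in> {0..1}" if "x \<in> {0..1}" "y \<in> {0..1}" for x y
    unfolding S_def using order_automorphism_in[OF \<psi> T\<phi>_in[OF that]] .
  have \<phi>_S: "\<phi> (S x y) = T (\<phi> x) (\<phi> y)" if "x \<in> {0..1}" "y \<in> {0..1}" for x y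
    unfolding S_def \<psi>_def using order_automorphism_f_inv[OF \<phi> T\<phi>_in[OF that]] .
  have "tnorm S"
    unfolding tnorm_def
  proof (intro conjI ballI impI)
    fix x y z :: real assume x: "x \<in> {0..1}" and y: "y \<in> {0..1}" and z: "z \<in> {0..1}"
    show "S x y \<in> {0..1}"
      using S_in[OF x y] .
    show "S x y = S y x"
      unfolding S_def using T_commute[OF \<phi>_in[OF x] \<phi>_in[OF y]] by simp
    have "S x (S y z) = \<psi> (T (\<phi> x) (T (\<phi> y) (\<phi> z)))"
      unfolding S_def[of x "S y z"] \<phi>_S[OF y z] ..
    also have "\<dots> = \<psi> (T (T (\<phi> x) (\<phi> y)) (\<phi> z))"
      using T_assoc[OF \<phi>_in[OF x] \<phi>_in[OF y] \<phi>_in[OF z]] by simp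
    also have "\<dots> = S (S x y) z"
      unfolding S_def[of "S x y" z] \<phi>_S[OF x y] ..
    finally show "S x (S y z) = S (S x y) z" .
  next
    fix x x' y :: real assume x: "x \<in> {0..1}" and x': "x' \<in> {0..1}" and y: "y \<in> {0..1}" and "x \<le> x'"
    then have "\<phi> x \<le> \<phi> x'"
      using order_automorphism_le_iff[OF \<phi> x x'] by simp
    then have "T (\<phi> y) (\<phi> x) \<le> T (\<phi> y) (\<phi> x')"
      using T_mono[OF \<phi>_in[OF x] \<phi>_in[OF x'] \<phi>_in[OF y]] by simp
    then show "S x y \<le> S x' y" "S y x \<le> S y x'"
      unfolding S_def using order_automorphism_le_iff[OF \<psi>] T\<phi>_in T_commute \<phi>_in x x' y by simp_all
  next
    fix x :: real assume x: "x \<in> {0..1}"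
    show "S x 1 = x"
      unfolding S_def \<psi>_def using order_automorphism_1[OF \<phi>] T_right_one[OF \<phi>_in[OF x]]
        order_automorphism_inv_f[OF \<phi> x] by simp
  qed
  then show ?thesis
    unfolding S_def \<psi>_def .
qed

end

locale strict_t_norm = t_norm +
  assumes T_continuous: "continuous_on ({0..1} \<times> {0..1}) (\<lambda>(x, y). T x y)"
    and T_strict_mono:
      "x \<in> {0..1} \<Longrightarrow> x' \<in> {0..1} \<Longrightarrow> y \<in> {0..1} \<Longrightarrow> 0 < y \<Longrightarrow> x < x' \<Longrightarrow> T x y < T x' y"

lemma strict_t_norm_iff: "strict_t_norm T \<longleftrightarrow> strict_tnorm T"
  unfolding strict_t_norm_def strict_t_norm_axioms_def t_norm_def strict_tnorm_def by blast

lemma strict_tnorm_mult: "strict_tnorm (\<lambda>x y. x * y)"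
  unfolding strict_tnorm_def tnorm_def
  by (auto simp: mult_le_one mult_right_mono mult_left_mono continuous_on_case_prod_mult)

context strict_t_norm
begin

lemma T_pos: "x \<in> {0..1} \<Longrightarrow> y \<in> {0..1} \<Longrightarrow> 0 < x \<Longrightarrow> 0 < y \<Longrightarrow> 0 < T x y"
  using T_strict_mono[of 0 x y] T_left_zero by simp

lemma T_less: "x \<in> {0..1} \<Longrightarrow> y \<in> {0..1} \<Longrightarrow> 0 < x \<Longrightarrow> y < 1 \<Longrightarrow> T x y < x"
  using T_strict_mono[of y 1 x] T_commute[of x y] T_left_one[of x] by simp

lemma tendsto_T:
  assumes "(f \<longlongrightarrow> u) F" "(g \<longlongrightarrow> v) F" "u \<in> {0..1}" "v \<in> {0..1}"
    "\<forall>\<^sub>F x in F. f x \<in> {0..1}" "\<forall>\<^sub>F x in F. g x \<in> {0..1}"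
  shows "((\<lambda>x. T (f x) (g x)) \<longlongrightarrow> T u v) F"
proof -
  have "((\<lambda>x. (f x, g x)) \<longlongrightarrow> (u, v)) F"
    using assms(1,2) by (rule tendsto_Pair)
  moreover have "\<forall>\<^sub>F x in F. (f x, g x) \<in> {0..1} \<times> {0..1}"
    using eventually_conj[OF assms(5,6)] by (simp add: mem_Times_iff)
  ultimately show ?thesis
    using continuous_on_tendsto_compose[OF T_continuous] assms(3,4) by fastforce
qed

lemma strict_tnorm_conj:
  assumes \<phi>: "order_automorphism \<phi>"
  shows "strict_tnorm (\<lambda>x y. inv_into {0..1} \<phi> (T (\<phi> x) (\<phi> y)))"
proof -
  define \<psi> where "\<psi> = inv_into {0..1} \<phi>"
  define S where "S x y = \<psi> (T (\<phi> x) (\<phi> y))" for x y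
  have \<psi>: "order_automorphism \<psi>"
    unfolding \<psi>_def using order_automorphism_inv[OF \<phi>] .
  have \<phi>_in: "\<phi> x \<in> {0..1}" if "x \<in> {0..1}" for x
    using order_automorphism_in[OF \<phi> that] .
  have T\<phi>_in: "T (\<phi> x) (\<phi> y) \<in> {0..1}" if "x \<in> {0..1}" "y \<in> {0..1}" for x y
    using T_in[OF \<phi>_in \<phi>_in] that .
  have "tnorm S"
    unfolding S_def \<psi>_def using tnorm_conj[OF \<phi>] .
  moreover have "continuous_on ({0..1} \<times> {0..1}) (\<lambda>(x, y). S x y)"
  proof -
    have "continuous_on ({0..1} \<times> {0..1}) (\<lambda>(x, y). T (\<phi> x) (\<phi> y))"
      using T_continuous order_automorphism_continuous[OF \<phi>] \<phi>_in
      by (rule continuous_on_case_prod_comp)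
    moreover have "(\<lambda>(x, y). T (\<phi> x) (\<phi> y)) ` ({0..1} \<times> {0..1}) \<subseteq> {0..1}"
      using T\<phi>_in by auto
    ultimately have "continuous_on ({0..1} \<times> {0..1}) (\<lambda>p. \<psi> ((\<lambda>(x, y). T (\<phi> x) (\<phi> y)) p))"
      by (rule continuous_on_compose2[OF order_automorphism_continuous[OF \<psi>]])
    then show ?thesis
      unfolding S_def by (simp add: case_prod_beta)
  qed
  moreover have "S x y < S x' y"
    if x: "x \<in> {0..1}" "x' \<in> {0..1}" "x < x'" and y: "y \<in> {0..1}" "0 < y" for x x' y
  proof -
    have "0 < \<phi> y"
      using order_automorphism_less_iff[OF \<phi>, of 0 y] order_automorphism_0[OF \<phi>] y by simp
    moreover have "\<phi> x < \<phi> x'"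
      using order_automorphism_less_iff[OF \<phi>] x by simp
    ultimately have "T (\<phi> x) (\<phi> y) < T (\<phi> x') (\<phi> y)"
      using T_strict_mono \<phi>_in x y by simp
    then show ?thesis
      unfolding S_def using order_automorphism_less_iff[OF \<psi>] T\<phi>_in x y by simp
  qed
  ultimately show ?thesis
    unfolding strict_tnorm_def S_def \<psi>_def by blast
qed

end

section \<open>The generator of a strict t-norm\<close>

definition dyadic_floor :: "nat \<Rightarrow> real \<Rightarrow> nat" where
  "dyadic_floor n t = nat \<lfloor>t * 2 ^ n\<rfloor>"

lemma dyadic_floor_mono: "s \<le> t \<Longrightarrow> dyadic_floor n s \<le> dyadic_floor n t"
  unfolding dyadic_floor_def by (intro nat_mono floor_mono) simp

lemma dyadic_floor_double:
  assumes "0 \<le> t"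
  shows "2 * dyadic_floor n t \<le> dyadic_floor (Suc n) t"
proof -
  have "t * 2 ^ Suc n = t * 2 ^ n + t * 2 ^ n"
    by simp
  then have "2 * \<lfloor>t * 2 ^ n\<rfloor> \<le> \<lfloor>t * 2 ^ Suc n\<rfloor>"
    by (simp only: mult_2 le_floor_add)
  then have "nat (2 * \<lfloor>t * 2 ^ n\<rfloor>) \<le> nat \<lfloor>t * 2 ^ Suc n\<rfloor>"
    by (rule nat_mono)
  then show ?thesis
    unfolding dyadic_floor_def using assms by (simp add: nat_mult_distrib)
qed

lemma dyadic_floor_add:
  assumes "0 \<le> s" "0 \<le> t"
  shows "dyadic_floor n s + dyadic_floor n t \<le> dyadic_floor n (s + t)"
    and "dyadic_floor n (s + t) \<le> Suc (dyadic_floor n s + dyadic_floor n t)"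
proof -
  let ?x = "s * 2 ^ n" and ?y = "t * 2 ^ n"
  have "(s + t) * 2 ^ n = ?x + ?y"
    by (simp add: distrib_right)
  moreover have "\<lfloor>?x\<rfloor> + \<lfloor>?y\<rfloor> \<le> \<lfloor>?x + ?y\<rfloor>" "\<lfloor>?x + ?y\<rfloor> \<le> \<lfloor>?x\<rfloor> + \<lfloor>?y\<rfloor> + 1"
    using le_floor_add[of ?x ?y] floor_add[of ?x ?y] by (auto split: if_splits)
  moreover have "0 \<le> \<lfloor>?x\<rfloor>" "0 \<le> \<lfloor>?y\<rfloor>"
    using assms by simp_all
  ultimately show "dyadic_floor n s + dyadic_floor n t \<le> dyadic_floor n (s + t)"
    and "dyadic_floor n (s + t) \<le> Suc (dyadic_floor n s + dyadic_floor n t)"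
    unfolding dyadic_floor_def by (simp_all add: nat_le_iff le_nat_iff)
qed

context strict_t_norm
begin

lemma tpow_pos:
  assumes "x \<in> {0..1}" "0 < x"
  shows "0 < tpow x k"
  by (induction k) (simp_all add: T_pos[OF assms(1) tpow_in[OF assms(1)] assms(2)])

lemma tpow_LIMSEQ_0:
  assumes x: "x \<in> {0..1}" "x < 1"
  shows "tpow x \<longlonglongrightarrow> 0"
proof -
  obtain L where L: "tpow x \<longlonglongrightarrow> L" "\<And>k. L \<le> tpow x k"
    using decseq_convergent[of "tpow x" 0] tpow_antimono[OF x(1)] tpow_in[OF x(1)]
    by (auto simp: decseq_def)
  have L_in: "L \<in> {0..1}"
    using L(2)[of 0] LIMSEQ_le_const[OF L(1), of 0] tpow_in[OF x(1)] by auto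
  have "(\<lambda>k. T x (tpow x k)) \<longlonglongrightarrow> T x L"
    using L(1) L_in x(1) tpow_in[OF x(1)] by (intro tendsto_T) auto
  moreover have "(\<lambda>k. T x (tpow x k)) \<longlonglongrightarrow> L"
    using LIMSEQ_Suc[OF L(1)] by simp
  ultimately have "T L x = L"
    using LIMSEQ_unique T_commute L_in x(1) by metis
  then have "L = 0"
    using T_less[OF L_in x(1)] L_in x(2) by fastforce
  with L(1) show ?thesis
    by simp
qed

lemma T_self_surj:
  assumes "y \<in> {0..1}"
  shows "\<exists>x\<in>{0..1}. T x x = y"
proof -
  have "continuous_on {0..1} (\<lambda>x. (\<lambda>(x, y). T x y) (x, x))"
    by (rule continuous_on_compose2[OF T_continuous]) (auto intro: continuous_intros)
  moreover have "T 0 0 \<le> y" "y \<le> T 1 1"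
    using T_left_zero[of 0] T_right_one[of 1] assms by auto
  ultimately show ?thesis
    using IVT'[of "\<lambda>x. T x x" 0 y 1] by auto
qed

definition T_sqrt :: "real \<Rightarrow> real" where
  "T_sqrt y = (SOME x. x \<in> {0..1} \<and> T x x = y)"

lemma T_sqrt: "y \<in> {0..1} \<Longrightarrow> T_sqrt y \<in> {0..1} \<and> T (T_sqrt y) (T_sqrt y) = y"
  unfolding T_sqrt_def using T_self_surj by (rule someI2_bex) auto

text \<open>\<open>half_root n\<close>, \<open>dyadic k n\<close> and \<open>gen t\<close> are the values of the generator at \<open>1 / 2\<^sup>n\<close>,
  \<open>k / 2\<^sup>n\<close> and \<open>t\<close>, normalised by \<open>gen 1 = 1/2\<close>.\<close>

primrec half_root :: "nat \<Rightarrow> real" where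
  "half_root 0 = 1/2"
| "half_root (Suc n) = T_sqrt (half_root n)"

lemma half_root_bounds: "0 < half_root n \<and> half_root n < 1"
proof (induction n)
  case (Suc n)
  then have "half_root n \<in> {0..1}" by auto
  from T_sqrt[OF this] Suc show ?case
    using T_left_zero[of 0] T_right_one[of 1] by (cases "T_sqrt (half_root n) = 0 \<or> T_sqrt (half_root n) = 1") auto
qed simp

lemma half_root_in: "half_root n \<in> {0..1}"
  using half_root_bounds[of n] by auto

lemma half_root_T_self: "T (half_root (Suc n)) (half_root (Suc n)) = half_root n"
  using T_sqrt[OF half_root_in[of n]] by simp

lemma half_root_LIMSEQ_1: "half_root \<longlonglongrightarrow> 1"
proof -
  have "half_root n \<le> half_root (Suc n)" for n
    using T_le[OF half_root_in half_root_in, of "Suc n" "Suc n"] half_root_T_self[of n] by simp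
  then obtain L where L: "half_root \<longlonglongrightarrow> L" "\<And>n. half_root n \<le> L"
    using incseq_convergent[of half_root 1] half_root_bounds by (auto simp: incseq_Suc_iff less_imp_le)
  have L_in: "L \<in> {0<..1}"
    using L(2)[of 0] LIMSEQ_le_const2[OF L(1), of 1] half_root_bounds by (auto intro: less_imp_le)
  have "(\<lambda>n. T (half_root (Suc n)) (half_root (Suc n))) \<longlonglongrightarrow> T L L"
    using LIMSEQ_Suc[OF L(1)] L_in half_root_in by (intro tendsto_T) (auto simp del: half_root.simps)
  then have "T L L = L"
    using L(1) LIMSEQ_unique unfolding half_root_T_self by blast
  then have "L = 1"
    using T_less[of L L] L_in by force
  with L(1) show ?thesis
    by simp
qed

definition dyadic :: "nat \<Rightarrow> nat \<Rightarrow> real" where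
  "dyadic k n = tpow (half_root n) k"

lemma dyadic_in: "dyadic k n \<in> {0..1}"
  unfolding dyadic_def using tpow_in half_root_in by blast

lemma dyadic_double: "dyadic (2 * k) (Suc n) = dyadic k n"
  unfolding dyadic_def using tpow_T_self[OF half_root_in[of "Suc n"], of k] half_root_T_self[of n]
  by (simp del: half_root.simps)

lemma dyadic_scale: "dyadic (k * 2 ^ m) (n + m) = dyadic k n"
proof (induction m)
  case (Suc m)
  then show ?case
    using dyadic_double[of "k * 2 ^ m" "n + m"] by (simp add: ac_simps)
qed simp

lemma dyadic_antimono: "k \<le> k' \<Longrightarrow> dyadic k' n \<le> dyadic k n"
  unfolding dyadic_def using tpow_antimono half_root_in by blast

lemma dyadic_add: "dyadic (k + k') n = T (dyadic k n) (dyadic k' n)"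
  unfolding dyadic_def using tpow_add half_root_in by blast

lemma dyadic_Suc: "dyadic (Suc k) n = T (dyadic k n) (half_root n)"
  using dyadic_add[of k 1 n] T_right_one[OF half_root_in] by (simp add: dyadic_def)

definition gen :: "real \<Rightarrow> real" where
  "gen t = lim (\<lambda>n. dyadic (dyadic_floor n t) n)"

lemma gen_LIMSEQ:
  assumes "0 \<le> t"
  shows "(\<lambda>n. dyadic (dyadic_floor n t) n) \<longlonglongrightarrow> gen t"
proof -
  have "decseq (\<lambda>n. dyadic (dyadic_floor n t) n)"
  proof (rule decseq_SucI)
    fix n
    have "dyadic (dyadic_floor (Suc n) t) (Suc n) \<le> dyadic (2 * dyadic_floor n t) (Suc n)"
      using dyadic_antimono dyadic_floor_double[OF assms] by blast
    then show "dyadic (dyadic_floor (Suc n) t) (Suc n) \<le> dyadic (dyadic_floor n t) n"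
      by (simp add: dyadic_double)
  qed
  then obtain L where "(\<lambda>n. dyadic (dyadic_floor n t) n) \<longlonglongrightarrow> L"
    using decseq_convergent[of _ 0] dyadic_in by fastforce
  then show ?thesis
    unfolding gen_def by (simp add: limI)
qed

lemma gen_in: "0 \<le> t \<Longrightarrow> gen t \<in> {0..1}"
  using LIMSEQ_le_const[OF gen_LIMSEQ, of t 0] LIMSEQ_le_const2[OF gen_LIMSEQ, of t 1] dyadic_in
  by auto

lemma gen_dyadic: "gen (real k / 2 ^ n) = dyadic k n"
proof -
  have "dyadic_floor (m + n) (real k / 2 ^ n) = k * 2 ^ m" for m
  proof -
    have "real k / 2 ^ n * 2 ^ (m + n) = real (k * 2 ^ m)"
      by (simp add: power_add)
    then show ?thesis
      unfolding dyadic_floor_def by (metis floor_of_nat nat_int)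
  qed
  then have "(\<lambda>m. dyadic (dyadic_floor (m + n) (real k / 2 ^ n)) (m + n)) \<longlonglongrightarrow> dyadic k n"
    using dyadic_scale by (simp add: add.commute)
  moreover have "(\<lambda>m. dyadic (dyadic_floor (m + n) (real k / 2 ^ n)) (m + n)) \<longlonglongrightarrow> gen (real k / 2 ^ n)"
    by (rule LIMSEQ_ignore_initial_segment[OF gen_LIMSEQ]) simp
  ultimately show ?thesis
    using LIMSEQ_unique by blast
qed

lemma gen_nat: "gen (real k) = tpow (1/2) k"
  using gen_dyadic[of k 0] by (simp add: dyadic_def)

lemma gen_half_root: "gen (1 / 2 ^ n) = half_root n"
  using gen_dyadic[of 1 n] T_right_one[OF half_root_in] by (simp add: dyadic_def)

lemma gen_antimono: "0 \<le> s \<Longrightarrow> s \<le> t \<Longrightarrow> gen t \<le> gen s"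
  using LIMSEQ_le[OF gen_LIMSEQ gen_LIMSEQ] dyadic_antimono dyadic_floor_mono by simp

lemma gen_add:
  assumes st: "0 \<le> s" "0 \<le> t"
  shows "gen (s + t) = T (gen s) (gen t)"
proof -
  let ?p = "\<lambda>n. dyadic_floor n s" and ?q = "\<lambda>n. dyadic_floor n t"
  have upper: "(\<lambda>n. T (dyadic (?p n) n) (dyadic (?q n) n)) \<longlonglongrightarrow> T (gen s) (gen t)"
    using gen_LIMSEQ gen_in st dyadic_in by (intro tendsto_T) auto
  have "(\<lambda>n. T (T (dyadic (?p n) n) (dyadic (?q n) n)) (half_root n)) \<longlonglongrightarrow> T (T (gen s) (gen t)) 1"
    using gen_in st dyadic_in T_in half_root_in by (intro tendsto_T[OF upper half_root_LIMSEQ_1]) auto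
  then have lower: "(\<lambda>n. T (T (dyadic (?p n) n) (dyadic (?q n) n)) (half_root n)) \<longlonglongrightarrow> T (gen s) (gen t)"
    using T_right_one T_in gen_in st by simp
  have "(\<lambda>n. dyadic (dyadic_floor n (s + t)) n) \<longlonglongrightarrow> T (gen s) (gen t)"
  proof (rule tendsto_sandwich[OF _ _ lower upper]; rule always_eventually; rule allI)
    fix n
    have "T (T (dyadic (?p n) n) (dyadic (?q n) n)) (half_root n) = dyadic (Suc (?p n + ?q n)) n"
      by (simp add: dyadic_add dyadic_Suc)
    also have "\<dots> \<le> dyadic (dyadic_floor n (s + t)) n"
      using dyadic_antimono dyadic_floor_add(2)[OF st] by blast
    finally show "T (T (dyadic (?p n) n) (dyadic (?q n) n)) (half_root n) \<le> dyadic (dyadic_floor n (s + t)) n" .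
    have "dyadic (dyadic_floor n (s + t)) n \<le> dyadic (?p n + ?q n) n"
      using dyadic_antimono dyadic_floor_add(1)[OF st] by blast
    then show "dyadic (dyadic_floor n (s + t)) n \<le> T (dyadic (?p n) n) (dyadic (?q n) n)"
      by (simp add: dyadic_add)
  qed
  then show ?thesis
    using gen_LIMSEQ[of "s + t"] st LIMSEQ_unique by auto
qed

lemma gen_pos:
  assumes "0 \<le> t"
  shows "0 < gen t"
proof -
  have "gen (real (nat \<lceil>t\<rceil>)) \<le> gen t"
    using gen_antimono assms by (simp add: real_nat_ceiling_ge)
  moreover have "0 < gen (real (nat \<lceil>t\<rceil>))"
    unfolding gen_nat by (rule tpow_pos) auto
  ultimately show ?thesis
    by simp
qed

lemma gen_less_1:
  assumes "0 < t"
  shows "gen t < 1"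
proof -
  obtain n where "(1/2::real) ^ n < t"
    using real_arch_pow_inv[OF assms, of "1/2"] by auto
  then have "gen t \<le> half_root n"
    using gen_antimono[of "1 / 2 ^ n" t] gen_half_root by (simp add: power_divide)
  then show ?thesis
    using half_root_bounds[of n] by simp
qed

lemma gen_strict_antimono:
  assumes "0 \<le> s" "s < t"
  shows "gen t < gen s"
proof -
  have "gen t = T (gen s) (gen (t - s))"
    using gen_add[of s "t - s"] assms by simp
  also have "\<dots> < gen s"
    using T_less gen_in gen_pos gen_less_1 assms by simp
  finally show ?thesis .
qed

lemma T_half_root_uniform:
  assumes "0 < e"
  obtains n where "\<And>x. x \<in> {0..1} \<Longrightarrow> x - T x (half_root n) < e"
proof -
  have "uniformly_continuous_on ({0..1} \<times> {0..1}) (\<lambda>(x, y). T x y)"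
    using compact_uniformly_continuous[OF T_continuous] by (simp add: compact_Times)
  then obtain d where "0 < d" and d: "\<And>p p'. p \<in> {0..1} \<times> {0..1} \<Longrightarrow> p' \<in> {0..1} \<times> {0..1} \<Longrightarrow>
      dist p' p < d \<Longrightarrow> dist ((\<lambda>(x, y). T x y) p') ((\<lambda>(x, y). T x y) p) < e"
    unfolding uniformly_continuous_on_def using assms by metis
  obtain n where n: "dist (half_root n) 1 < d"
    using half_root_LIMSEQ_1 \<open>0 < d\<close> unfolding LIMSEQ_def by blast
  have "x - T x (half_root n) < e" if x: "x \<in> {0..1}" for x
    using d[of "(x, 1)" "(x, half_root n)"] x n half_root_in[of n] T_right_one[OF x]
    by (simp add: dist_Pair_Pair dist_real_def)
  then show ?thesis
    using that by blast
qed

lemma gen_continuous: "continuous_on {0..} gen"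
  unfolding continuous_on_iff
proof (intro ballI allI impI)
  fix t e :: real assume t: "t \<in> {0..}" and "0 < e"
  then obtain n where n: "\<And>x. x \<in> {0..1} \<Longrightarrow> x - T x (half_root n) < e"
    using T_half_root_uniform by blast
  have close: "\<bar>gen v - gen u\<bar> < e" if "0 \<le> u" "u \<le> v" "v - u \<le> 1 / 2 ^ n" for u v
  proof -
    have "half_root n \<le> gen (v - u)"
      using gen_antimono[of "v - u" "1 / 2 ^ n"] gen_half_root that by simp
    then have "T (gen u) (half_root n) \<le> gen v"
      using gen_add[of u "v - u"] T_mono half_root_in gen_in that by simp
    moreover have "gen v \<le> gen u"
      using gen_antimono that by simp
    ultimately show ?thesis
      using n[OF gen_in[OF \<open>0 \<le> u\<close>]] by simp
  qed
  show "\<exists>d>0. \<forall>t'\<in>{0..}. dist t' t < d \<longrightarrow> dist (gen t') (gen t) < e"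
  proof (intro exI[of _ "1 / 2 ^ n"] conjI ballI impI)
    fix t' assume "t' \<in> {0..}" "dist t' t < 1 / 2 ^ n"
    then show "dist (gen t') (gen t) < e"
      using close[of t t'] close[of t' t] t by (cases "t \<le> t'") (auto simp: dist_real_def abs_minus_commute)
  qed simp
qed

lemma gen_surj:
  assumes "0 < y" "y \<le> 1"
  obtains t where "0 \<le> t" "gen t = y"
proof -
  have "tpow (1/2) \<longlonglongrightarrow> 0"
    by (rule tpow_LIMSEQ_0) auto
  from order_tendstoD(2)[OF this assms(1)] obtain k where "tpow (1/2) k < y"
    by (auto simp: eventually_sequentially)
  then have "gen (real k) \<le> y" "y \<le> gen 0"
    using gen_nat[of k] gen_nat[of 0] assms by simp_all
  then show ?thesis
    using IVT2'[of gen "real k" y 0] continuous_on_subset[OF gen_continuous] that by force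
qed

definition tnorm_iso :: "real \<Rightarrow> real" where
  "tnorm_iso s = (if s = 0 then 0 else gen (- ln s))"

lemma tnorm_iso_strict_mono: "strict_mono_on {0..1} tnorm_iso"
proof (rule strict_mono_onI)
  fix s s' :: real assume s: "s \<in> {0..1}" and s': "s' \<in> {0..1}" and "s < s'"
  then have "0 < s'"
    by simp
  with s' have "0 \<le> - ln s'"
    by simp
  show "tnorm_iso s < tnorm_iso s'"
  proof (cases "s = 0")
    case True
    with gen_pos[OF \<open>0 \<le> - ln s'\<close>] \<open>0 < s'\<close> show ?thesis
      by (simp add: tnorm_iso_def)
  next
    case False
    with s \<open>s < s'\<close> have "- ln s' < - ln s"
      by simp
    with gen_strict_antimono[OF \<open>0 \<le> - ln s'\<close>] \<open>0 < s'\<close> False show ?thesis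
      by (simp add: tnorm_iso_def)
  qed
qed

lemma tnorm_iso_image: "tnorm_iso ` {0..1} = {0..1}"
proof
  show "tnorm_iso ` {0..1} \<subseteq> {0..1}"
  proof (rule image_subsetI)
    fix s :: real assume "s \<in> {0..1}"
    then have "s \<noteq> 0 \<Longrightarrow> 0 \<le> - ln s"
      by simp
    then show "tnorm_iso s \<in> {0..1}"
      using gen_in by (simp add: tnorm_iso_def)
  qed
  show "{0..1} \<subseteq> tnorm_iso ` {0..1}"
  proof
    fix x :: real assume x: "x \<in> {0..1}"
    show "x \<in> tnorm_iso ` {0..1}"
    proof (cases "x = 0")
      case True
      then show ?thesis
        using image_eqI[of x tnorm_iso 0 "{0..1}"] by (simp add: tnorm_iso_def)
    next
      case False
      then obtain t where "0 \<le> t" "gen t = x"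
        using gen_surj[of x] x by auto
      then have "tnorm_iso (exp (- t)) = x" "exp (- t) \<in> {0..1}"
        by (simp_all add: tnorm_iso_def)
      then show ?thesis
        using image_eqI[of x tnorm_iso "exp (- t)" "{0..1}"] by simp
    qed
  qed
qed

lemma order_automorphism_tnorm_iso: "order_automorphism tnorm_iso"
  using tnorm_iso_strict_mono tnorm_iso_image by (rule order_automorphismI)

lemma tnorm_iso_mult:
  assumes "s \<in> {0..1}" "s' \<in> {0..1}"
  shows "tnorm_iso (s * s') = T (tnorm_iso s) (tnorm_iso s')"
proof (cases "s = 0 \<or> s' = 0")
  case True
  moreover have "tnorm_iso 0 = 0"
    by (simp add: tnorm_iso_def)
  moreover have "tnorm_iso s \<in> {0..1}" "tnorm_iso s' \<in> {0..1}"
    using order_automorphism_in[OF order_automorphism_tnorm_iso] assms by blast+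
  ultimately show ?thesis
    using T_left_zero T_right_zero by auto
next
  case False
  with assms have "0 < s" "0 < s'" "0 \<le> - ln s" "0 \<le> - ln s'"
    by simp_all
  then show ?thesis
    using gen_add[of "- ln s" "- ln s'"] by (simp add: tnorm_iso_def ln_mult)
qed

theorem multiplicative_representation:
  obtains \<phi> where "order_automorphism \<phi>" "\<And>x y. x \<in> {0..1} \<Longrightarrow> y \<in> {0..1} \<Longrightarrow> \<phi> (T x y) = \<phi> x * \<phi> y"
proof -
  define \<phi> where "\<phi> = inv_into {0..1} tnorm_iso"
  have \<phi>: "order_automorphism \<phi>"
    unfolding \<phi>_def using order_automorphism_inv[OF order_automorphism_tnorm_iso] .
  have "\<phi> (T x y) = \<phi> x * \<phi> y" if "x \<in> {0..1}" "y \<in> {0..1}" for x y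
  proof -
    have "T x y = tnorm_iso (\<phi> x * \<phi> y)"
      using tnorm_iso_mult order_automorphism_in[OF \<phi>] that
        order_automorphism_f_inv[OF order_automorphism_tnorm_iso] unfolding \<phi>_def by simp
    then show ?thesis
      using order_automorphism_inv_f[OF order_automorphism_tnorm_iso]
        order_automorphism_mult_in[OF \<phi> that] unfolding \<phi>_def by simp
  qed
  with \<phi> that show ?thesis
    by blast
qed

end

section \<open>The three representations\<close>

definition mult_representable :: "(real \<Rightarrow> real \<Rightarrow> real) \<Rightarrow> bool" where
  "mult_representable Ov \<longleftrightarrow> (\<exists>\<phi> H. order_automorphism \<phi> \<and> pseudo_automorphism H \<and>
     (\<forall>x\<in>{0..1}. \<forall>y\<in>{0..1}. Ov x y = H (\<phi> x * \<phi> y)))"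

lemma mult_representableE:
  assumes "mult_representable Ov"
  obtains \<phi> H where "order_automorphism \<phi>" "pseudo_automorphism H"
    "\<forall>x\<in>{0..1}. \<forall>y\<in>{0..1}. Ov x y = H (\<phi> x * \<phi> y)"
  using assms unfolding mult_representable_def by blast

lemma overlap_of_mult_representable: "mult_representable Ov \<Longrightarrow> overlap Ov"
  by (elim mult_representableE) (rule overlap_comp[OF overlap_mult])

lemma tnorm_form_of_mult_representable:
  assumes "mult_representable Ov"
  shows "overlap Ov \<and> (\<exists>F T. pseudo_automorphism F \<and> strict_tnorm T \<and>
    (\<forall>x\<in>{0..1}. \<forall>y\<in>{0..1}. Ov x y = F (T x y)))"
proof -
  obtain \<phi> H where \<phi>: "order_automorphism \<phi>" and H: "pseudo_automorphism H"
    and Ov: "\<forall>x\<in>{0..1}. \<forall>y\<in>{0..1}. Ov x y = H (\<phi> x * \<phi> y)"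
    using assms by (rule mult_representableE)
  show ?thesis
  proof (intro conjI exI)
    show "overlap Ov"
      using overlap_of_mult_representable[OF assms] .
    show "pseudo_automorphism (H \<circ> \<phi>)"
      using pseudo_automorphism_comp[OF H \<phi>] .
    show "strict_tnorm (\<lambda>x y. inv_into {0..1} \<phi> (\<phi> x * \<phi> y))"
      using strict_t_norm.strict_tnorm_conj[OF strict_t_norm_iff[THEN iffD2, OF strict_tnorm_mult] \<phi>] .
    show "\<forall>x\<in>{0..1}. \<forall>y\<in>{0..1}. Ov x y = (H \<circ> \<phi>) (inv_into {0..1} \<phi> (\<phi> x * \<phi> y))"
      using Ov order_automorphism_f_inv[OF \<phi> order_automorphism_mult_in[OF \<phi>]] by simp
  qed
qed

lemma mult_representable_of_tnorm_form:
  assumes F: "pseudo_automorphism F" and T: "strict_tnorm T"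
    and Ov: "\<forall>x\<in>{0..1}. \<forall>y\<in>{0..1}. Ov x y = F (T x y)"
  shows "mult_representable Ov"
proof -
  interpret strict_t_norm T
    using T by (simp add: strict_t_norm_iff)
  obtain \<phi> where \<phi>: "order_automorphism \<phi>"
    and hom: "\<And>x y. x \<in> {0..1} \<Longrightarrow> y \<in> {0..1} \<Longrightarrow> \<phi> (T x y) = \<phi> x * \<phi> y"
    using multiplicative_representation by blast
  have "Ov x y = (F \<circ> inv_into {0..1} \<phi>) (\<phi> x * \<phi> y)" if "x \<in> {0..1}" "y \<in> {0..1}" for x y
    using Ov hom[symmetric] order_automorphism_inv_f[OF \<phi> T_in] that by simp
  with \<phi> pseudo_automorphism_comp[OF F order_automorphism_inv[OF \<phi>]] show ?thesis
    unfolding mult_representable_def by blast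
qed

lemma additive_form_of_mult_representable:
  fixes a :: real
  assumes a: "0 \<le> a" and Ov_rep: "mult_representable Ov"
  shows "\<exists>(\<theta>::real \<Rightarrow> ennreal) (\<psi>::ennreal \<Rightarrow> real).
    continuous_on {0..1} \<theta> \<and> (\<forall>x\<in>{0..1}. \<forall>y\<in>{0..1}. x < y \<longrightarrow> \<theta> y < \<theta> x) \<and>
    continuous_on UNIV \<psi> \<and> antimono \<psi> \<and> (\<forall>z. \<psi> z \<in> {0..1}) \<and>
    (\<forall>x\<in>{0..1}. \<forall>y\<in>{0..1}. Ov x y = \<psi> (\<theta> x + \<theta> y)) \<and>
    overlap Ov \<and>
    ((\<forall>x\<in>{0..1}. \<theta> x = ennreal (a / 2) \<longleftrightarrow> x = 1) \<or> (\<forall>z. \<psi> z = 1 \<longleftrightarrow> z \<le> ennreal a))"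
proof -
  obtain \<phi> H where \<phi>: "order_automorphism \<phi>" and H: "pseudo_automorphism H"
    and Ov: "\<forall>x\<in>{0..1}. \<forall>y\<in>{0..1}. Ov x y = H (\<phi> x * \<phi> y)"
    using Ov_rep by (rule mult_representableE)
  define \<theta> where "\<theta> x = ennreal (a / 2) + neg_ln (\<phi> x)" for x
  define \<psi> where "\<psi> z = H (exp_neg (z - ennreal a))" for z
  have \<phi>_in: "\<phi> x \<in> {0..1}" if "x \<in> {0..1}" for x
    using order_automorphism_in[OF \<phi> that] .
  have "continuous_on {0..1} (\<lambda>x. neg_ln (\<phi> x))"
    using continuous_on_compose2[OF continuous_on_neg_ln order_automorphism_continuous[OF \<phi>]] \<phi>_in
    by blast
  then have \<theta>_cont: "continuous_on {0..1} \<theta>"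
    unfolding \<theta>_def by (intro continuous_intros)
  have \<theta>_strict: "\<theta> y < \<theta> x" if "x \<in> {0..1}" "y \<in> {0..1}" "x < y" for x y
    using that order_automorphism_less_iff[OF \<phi>] \<phi>_in
    by (simp add: \<theta>_def ennreal_add_left_cancel_less neg_ln_less_iff)
  have \<psi>: "continuous_on UNIV \<psi>" "antimono \<psi>" "\<psi> z \<in> {0..1}" for z
    unfolding \<psi>_def using pseudo_automorphism_exp_neg_minus[OF H] by simp_all
  have "Ov x y = \<psi> (\<theta> x + \<theta> y)" if "x \<in> {0..1}" "y \<in> {0..1}" for x y
  proof -
    have "\<theta> x + \<theta> y = (neg_ln (\<phi> x) + neg_ln (\<phi> y)) + (ennreal (a / 2) + ennreal (a / 2))"
      unfolding \<theta>_def by (simp add: ac_simps)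
    also have "\<dots> = neg_ln (\<phi> x * \<phi> y) + ennreal a"
      using a neg_ln_mult[OF \<phi>_in[OF that(1)] \<phi>_in[OF that(2)]] by (simp flip: ennreal_plus)
    finally show ?thesis
      using Ov order_automorphism_mult_in[OF \<phi> that] that by (simp add: \<psi>_def)
  qed
  moreover have "\<theta> x = ennreal (a / 2) \<longleftrightarrow> x = 1" if "x \<in> {0..1}" for x
  proof -
    have "\<theta> x = ennreal (a / 2) \<longleftrightarrow> neg_ln (\<phi> x) = 0"
      using ennreal_add_left_cancel[of "ennreal (a / 2)" "neg_ln (\<phi> x)" 0] by (simp add: \<theta>_def)
    also have "\<dots> \<longleftrightarrow> x = 1"
      using neg_ln_eq_0_iff[OF \<phi>_in[OF that]] order_automorphism_eq_iff[OF \<phi> that, of 1]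
        order_automorphism_1[OF \<phi>] by simp
    finally show ?thesis .
  qed
  ultimately show ?thesis
    using \<theta>_cont \<theta>_strict \<psi> overlap_of_mult_representable[OF Ov_rep] by blast
qed

lemma additive_generator_0_eq_infinity:
  fixes \<theta> :: "real \<Rightarrow> ennreal" and \<psi> :: "ennreal \<Rightarrow> real"
  assumes \<theta>_cont: "continuous_on {0..1} \<theta>" and \<theta>_strict: "\<theta> 1 < \<theta> 0"
    and Ov: "\<forall>x\<in>{0..1}. \<forall>y\<in>{0..1}. Ov x y = \<psi> (\<theta> x + \<theta> y)" and O: "overlap Ov"
  shows "\<theta> 0 = \<infinity>"
proof (rule ccontr)
  assume "\<theta> 0 \<noteq> \<infinity>"
  then obtain A B where A: "\<theta> 0 = ennreal A" "0 \<le> A" and B: "\<theta> 1 = ennreal B" "0 \<le> B"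
    using \<theta>_strict by (cases "\<theta> 0"; cases "\<theta> 1") auto
  with \<theta>_strict have "B < A"
    by (simp add: ennreal_less_iff)
  define M where "M = ennreal ((A + B) / 2)"
  have "\<theta> 1 \<le> M" "M \<le> \<theta> 0"
    using A B \<open>B < A\<close> unfolding M_def by (auto intro: ennreal_leI)
  then obtain x where x: "x \<in> {0..1}" "\<theta> x = M"
    using IVT2'[of \<theta> 1 M 0] \<theta>_cont by auto
  have "x \<noteq> 0"
    using x A B \<open>B < A\<close> unfolding M_def by (auto simp: ennreal_inj)
  have "\<theta> x + \<theta> x = \<theta> 0 + \<theta> 1"
    using x A B unfolding M_def by (simp flip: ennreal_plus)
  then have "Ov x x = Ov 0 1"
    using Ov x by simp
  also have "\<dots> = 0"
    using overlap_eq_0_iff[OF O, of 0 1] by simp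
  finally show False
    using overlap_eq_0_iff[OF O x(1) x(1)] \<open>x \<noteq> 0\<close> by simp
qed

lemma order_automorphism_of_additive_generator:
  fixes \<theta> :: "real \<Rightarrow> ennreal"
  assumes \<theta>_cont: "continuous_on {0..1} \<theta>" and \<theta>_strict: "\<forall>x\<in>{0..1}. \<forall>y\<in>{0..1}. x < y \<longrightarrow> \<theta> y < \<theta> x"
    and \<theta>_0: "\<theta> 0 = \<infinity>"
  shows "order_automorphism (\<lambda>x. exp_neg (\<theta> x - \<theta> 1))"
proof (rule order_automorphismI)
  have \<theta>_1: "\<theta> 1 \<le> \<theta> x" if "x \<in> {0..1}" for x
    using \<theta>_strict that by (cases "x = 1") (auto intro: less_imp_le)
  show "strict_mono_on {0..1} (\<lambda>x. exp_neg (\<theta> x - \<theta> 1))"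
  proof (rule strict_mono_onI)
    fix x y :: real assume x: "x \<in> {0..1}" and y: "y \<in> {0..1}" and "x < y"
    then have "\<theta> y < \<theta> x"
      using \<theta>_strict by blast
    then have "exp_neg (\<theta> x - \<theta> 1) \<le> exp_neg (\<theta> y - \<theta> 1)"
      by (intro exp_neg_minus_antimono[THEN antimonoD] less_imp_le)
    moreover have "exp_neg (\<theta> x - \<theta> 1) \<noteq> exp_neg (\<theta> y - \<theta> 1)"
    proof
      assume "exp_neg (\<theta> x - \<theta> 1) = exp_neg (\<theta> y - \<theta> 1)"
      then have "\<theta> x - \<theta> 1 = \<theta> y - \<theta> 1"
        by (metis neg_ln_exp_neg)
      then have "\<theta> x = \<theta> y"
        using diff_add_cancel_ennreal[OF \<theta>_1[OF x]] diff_add_cancel_ennreal[OF \<theta>_1[OF y]] by metis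
      with \<open>\<theta> y < \<theta> x\<close> show False
        by simp
    qed
    ultimately show "exp_neg (\<theta> x - \<theta> 1) < exp_neg (\<theta> y - \<theta> 1)"
      by simp
  qed
  show "(\<lambda>x. exp_neg (\<theta> x - \<theta> 1)) ` {0..1} = {0..1}"
  proof
    show "(\<lambda>x. exp_neg (\<theta> x - \<theta> 1)) ` {0..1} \<subseteq> {0..1}"
      using exp_neg_in by blast
    show "{0..1} \<subseteq> (\<lambda>x. exp_neg (\<theta> x - \<theta> 1)) ` {0..1}"
    proof
      fix t :: real assume t: "t \<in> {0..1}"
      have "\<theta> 1 \<le> \<theta> 1 + neg_ln t" "\<theta> 1 + neg_ln t \<le> \<theta> 0"
        unfolding \<theta>_0 by simp_all
      then obtain x where x: "x \<in> {0..1}" "\<theta> x = \<theta> 1 + neg_ln t"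
        using IVT2'[of \<theta> 1 "\<theta> 1 + neg_ln t" 0] \<theta>_cont by auto
      moreover have "\<theta> 1 \<noteq> \<infinity>"
        using \<theta>_strict[rule_format, of 0 1] \<theta>_0 by simp
      ultimately have "exp_neg (\<theta> x - \<theta> 1) = t"
        using t by (simp add: infinity_ennreal_def)
      with x show "t \<in> (\<lambda>x. exp_neg (\<theta> x - \<theta> 1)) ` {0..1}"
        by blast
    qed
  qed
qed

lemma mult_representable_of_additive_form:
  fixes \<theta> :: "real \<Rightarrow> ennreal" and \<psi> :: "ennreal \<Rightarrow> real"
  assumes \<theta>_cont: "continuous_on {0..1} \<theta>" and \<theta>_strict: "\<forall>x\<in>{0..1}. \<forall>y\<in>{0..1}. x < y \<longrightarrow> \<theta> y < \<theta> x"
    and Ov: "\<forall>x\<in>{0..1}. \<forall>y\<in>{0..1}. Ov x y = \<psi> (\<theta> x + \<theta> y)" and O: "overlap Ov"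
  shows "mult_representable Ov"
proof -
  have \<theta>_0: "\<theta> 0 = \<infinity>"
    using additive_generator_0_eq_infinity[OF \<theta>_cont _ Ov O] \<theta>_strict[rule_format, of 0 1] by simp
  define \<phi> where "\<phi> = (\<lambda>x. exp_neg (\<theta> x - \<theta> 1))"
  have \<phi>: "order_automorphism \<phi>"
    unfolding \<phi>_def using order_automorphism_of_additive_generator[OF \<theta>_cont \<theta>_strict \<theta>_0] .
  have \<theta>_eq: "\<theta> x = \<theta> 1 + neg_ln (\<phi> x)" if "x \<in> {0..1}" for x
  proof -
    have "\<theta> 1 \<le> \<theta> x"
      using \<theta>_strict that by (cases "x = 1") (auto intro: less_imp_le)
    then have "\<theta> x - \<theta> 1 + \<theta> 1 = \<theta> x"
      by (rule diff_add_cancel_ennreal)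
    then show ?thesis
      unfolding \<phi>_def neg_ln_exp_neg add.commute[of "\<theta> 1"] by simp
  qed
  define u where "u = inv_into {0..1} \<phi> \<circ> sqrt"
  have u: "order_automorphism u"
    unfolding u_def using order_automorphism_comp[OF order_automorphism_inv[OF \<phi>] order_automorphism_sqrt] .
  have "Ov x y = Ov (u (\<phi> x * \<phi> y)) (u (\<phi> x * \<phi> y))" if x: "x \<in> {0..1}" and y: "y \<in> {0..1}" for x y
  proof -
    define p where "p = \<phi> x * \<phi> y"
    have p: "p \<in> {0..1}"
      unfolding p_def using order_automorphism_mult_in[OF \<phi> x y] .
    then have w: "u p \<in> {0..1}" "\<phi> (u p) = sqrt p"
      using order_automorphism_in[OF u] order_automorphism_f_inv[OF \<phi>] by (simp_all add: u_def)
    \<comment> \<open>\<open>\<theta> = \<theta> 1 + neg_ln \<circ> \<phi>\<close> turns the product \<open>p\<close> into a sum, and \<open>p = \<phi> w * \<phi> w\<close> for \<open>w = u p\<close>.\<close>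
    have "\<theta> x + \<theta> y = \<theta> 1 + \<theta> 1 + neg_ln p"
      using \<theta>_eq[OF x] \<theta>_eq[OF y]
        neg_ln_mult[OF order_automorphism_in[OF \<phi> x] order_automorphism_in[OF \<phi> y]]
      unfolding p_def by (simp add: ac_simps)
    also have "\<dots> = \<theta> (u p) + \<theta> (u p)"
      using \<theta>_eq[OF w(1)] w(2) neg_ln_mult[of "sqrt p" "sqrt p"] p
      by (simp add: ac_simps real_sqrt_le_1_iff)
    finally show ?thesis
      using Ov x y w(1) unfolding p_def by simp
  qed
  with \<phi> pseudo_automorphism_comp[OF overlap_diagonal[OF O] u] show ?thesis
    unfolding mult_representable_def by (auto simp: o_def)
qed

theorem theorem5p1:
  fixes a :: real and Ov :: "real \<Rightarrow> real \<Rightarrow> real"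
  assumes "a \<ge> 0"
  defines "C1 \<equiv> (\<exists>(\<theta>::real \<Rightarrow> ennreal) (\<psi>::ennreal \<Rightarrow> real).
              continuous_on {0..1} \<theta> \<and>
              (\<forall>x\<in>{0..1}. \<forall>y\<in>{0..1}. x < y \<longrightarrow> \<theta> y < \<theta> x) \<and>
              continuous_on UNIV \<psi> \<and> antimono \<psi> \<and> (\<forall>z. \<psi> z \<in> {0..1}) \<and>
              (\<forall>x\<in>{0..1}. \<forall>y\<in>{0..1}. Ov x y = \<psi> (\<theta> x + \<theta> y)) \<and>
              overlap Ov \<and>
              ((\<forall>x\<in>{0..1}. \<theta> x = ennreal (a / 2) \<longleftrightarrow> x = 1) \<or>
               (\<forall>z. \<psi> z = 1 \<longleftrightarrow> z \<le> ennreal a)))"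
    and "C2 \<equiv> overlap Ov \<and> (\<exists>F T. pseudo_automorphism F \<and> strict_tnorm T \<and>
              (\<forall>x\<in>{0..1}. \<forall>y\<in>{0..1}. Ov x y = F (T x y)))"
    and "C3 \<equiv> (\<exists>\<phi> H. bij_betw \<phi> {0..1} {0..1} \<and> strict_mono_on {0..1} \<phi> \<and>
              pseudo_automorphism H \<and>
              (\<forall>x\<in>{0..1}. \<forall>y\<in>{0..1}. Ov x y = H (\<phi> x * \<phi> y)))"
  shows "(C1 \<longleftrightarrow> C2) \<and> (C2 \<longleftrightarrow> C3)"
proof -
  have C3_iff: "C3 \<longleftrightarrow> mult_representable Ov"
    unfolding assms(4) mult_representable_def order_automorphism_def conj_assoc by (rule refl)
  have "C1 \<and> C2" if C3
  proof -
    from that have "mult_representable Ov"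
      unfolding C3_iff .
    from additive_form_of_mult_representable[OF assms(1) this] tnorm_form_of_mult_representable[OF this]
    show ?thesis
      unfolding assms(2,3) ..
  qed
  moreover have C3 if C1
  proof -
    from that obtain \<theta> :: "real \<Rightarrow> ennreal" and \<psi> :: "ennreal \<Rightarrow> real"
      where "continuous_on {0..1} \<theta>" "\<forall>x\<in>{0..1}. \<forall>y\<in>{0..1}. x < y \<longrightarrow> \<theta> y < \<theta> x"
        "\<forall>x\<in>{0..1}. \<forall>y\<in>{0..1}. Ov x y = \<psi> (\<theta> x + \<theta> y)" "overlap Ov"
      unfolding assms(2) by blast
    from mult_representable_of_additive_form[OF this] show C3
      unfolding C3_iff .
  qed
  moreover have C3 if C2
  proof -
    from that obtain F T where "pseudo_automorphism F" "strict_tnorm T"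
      "\<forall>x\<in>{0..1}. \<forall>y\<in>{0..1}. Ov x y = F (T x y)"
      unfolding assms(3) by blast
    from mult_representable_of_tnorm_form[OF this] show C3
      unfolding C3_iff .
  qed
  ultimately show ?thesis
    by blast
qed

end
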